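(* Let $H$ be a Hopf algebra, $E$ an $H$-comodule algebra, and $X\in (E\otimes H)^\times$. Define $\Delta_E^X:E\to E\otimes H$ by $\Delta_E^X(x)=X\Delta_E(x)$. Then (1) $X\in\mathcal{Z}^1(H,E)$ if and only if $(E,\Delta^X_E)$ (with $E$ acting on itself by right multiplication) is an $(H,E)$-Hopf module; (2) two Hopf $1$-cocycles $X,X'$ are cohomologous if and only if the $(H,E)$-Hopf modules $(E,\Delta_E^X)$ and $(E,\Delta_E^{X'})$ are isomorphic.
   Context: $k$ commutative ring, $\otimes=\otimes_k$. An $H$-comodule algebra is an algebra $E$ with coaction $\Delta_E:E\to E\otimes H$ that is an algebra morphism. An $(H,E)$-Hopf module is a right $E$-module $M$ with a right $H$-comodule structure $\Delta_M$ (coassociative, counital) such that $\Delta_M(ms)=\Delta_M(m)\Delta_E(s)$; a morphism is an $E$-linear $H$-colinear map. $d^0(x)=\Delta_E(x)$, $d^1(x)=x\otimes1$ for $x\in E$; $d^0(X)=(\Delta_E\otimes\mathrm{id}_H)(X)$, $d^1(X)=(\mathrm{id}_E\otimes\Delta_H)(X)$, $d^2(X)=X\otimes1$ for $X\in E\otimes H$. $\mathcal{Z}^1(H,E)=\{X\in(E\otimes H)^\times: d^2(X)d^0(X)=d^1(X)\}$; $X,X'$ are cohomologous if $X'=d^1(x^{-1})Xd^0(x)$ for some $x\in E^\times$. *)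

theory Defs
  imports Complex_Main "HOL-Library.Function_Algebras"
begin

text \<open>The ground ring k is a type 'k of class comm_ring_1; k-modules are types of class
ab_group_add equipped with a scalar multiplication satisfying the locale module from
HOL.Modules; k-linear maps are given by the locale module_hom.\<close>

definition tbilinear ::
  "('k::comm_ring_1 \<Rightarrow> 'a::ab_group_add \<Rightarrow> 'a) \<Rightarrow> ('k \<Rightarrow> 'b::ab_group_add \<Rightarrow> 'b) \<Rightarrow>
   ('k \<Rightarrow> 'c::ab_group_add \<Rightarrow> 'c) \<Rightarrow> ('a \<Rightarrow> 'b \<Rightarrow> 'c) \<Rightarrow> bool" where
  "tbilinear sA sB sC f \<longleftrightarrow>
     (\<forall>a. module_hom sB sC (f a)) \<and> (\<forall>b. module_hom sA sC (\<lambda>a. f a b))"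

definition fdelta :: "'p \<Rightarrow> 'p \<Rightarrow> 'k::comm_ring_1" where
  "fdelta p = (\<lambda>q. if q = p then 1 else 0)"

text \<open>Generators of the submodule of relations in the free k-module on A x B
(finitely supported functions A x B -> k).\<close>
definition tensor_rels ::
  "('k::comm_ring_1 \<Rightarrow> 'a::ab_group_add \<Rightarrow> 'a) \<Rightarrow> ('k \<Rightarrow> 'b::ab_group_add \<Rightarrow> 'b) \<Rightarrow>
   ('a \<times> 'b \<Rightarrow> 'k) set" where
  "tensor_rels sA sB =
     (\<lambda>(a, a', b). fdelta (a + a', b) - fdelta (a, b) - fdelta (a', b)) ` UNIV \<union>
     (\<lambda>(a, b, b'). fdelta (a, b + b') - fdelta (a, b) - fdelta (a, b')) ` UNIV \<union>
     (\<lambda>(c, a, b). fdelta (sA c a, b) - (\<lambda>q. c * fdelta (a, b) q)) ` UNIV \<union>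
     (\<lambda>(c, a, b). fdelta (a, sB c b) - (\<lambda>q. c * fdelta (a, b) q)) ` UNIV"

definition tensor_canon ::
  "('k::comm_ring_1 \<Rightarrow> 't::ab_group_add \<Rightarrow> 't) \<Rightarrow> ('a \<Rightarrow> 'b \<Rightarrow> 't) \<Rightarrow> ('a \<times> 'b \<Rightarrow> 'k) \<Rightarrow> 't" where
  "tensor_canon sT t f = (\<Sum>p\<in>{p. f p \<noteq> 0}. sT (f p) (t (fst p) (snd p)))"

text \<open>(T, t) is a tensor product of A and B over k: t is k-bilinear and the canonical map
from the free module on A x B onto T is surjective with kernel the submodule generated by
the bilinearity relations, i.e. T = F(A x B)/R with t a b the class of (a,b).\<close>
definition is_tensor ::
  "('k::comm_ring_1 \<Rightarrow> 'a::ab_group_add \<Rightarrow> 'a) \<Rightarrow> ('k \<Rightarrow> 'b::ab_group_add \<Rightarrow> 'b) \<Rightarrow>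
   ('k \<Rightarrow> 't::ab_group_add \<Rightarrow> 't) \<Rightarrow> ('a \<Rightarrow> 'b \<Rightarrow> 't) \<Rightarrow> bool" where
  "is_tensor sA sB sT t \<longleftrightarrow>
     module sA \<and> module sB \<and> module sT \<and> tbilinear sA sB sT t \<and>
     (\<forall>z. \<exists>f. finite {p. f p \<noteq> 0} \<and> z = tensor_canon sT t f) \<and>
     (\<forall>f. finite {p. f p \<noteq> 0} \<and> tensor_canon sT t f = 0 \<longrightarrow>
          f \<in> module.span (\<lambda>c g q. c * g q) (tensor_rels sA sB))"

definition tlift ::
  "('k::comm_ring_1 \<Rightarrow> 't::ab_group_add \<Rightarrow> 't) \<Rightarrow> ('k \<Rightarrow> 'c::ab_group_add \<Rightarrow> 'c) \<Rightarrow>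
   ('a \<Rightarrow> 'b \<Rightarrow> 't) \<Rightarrow> ('a \<Rightarrow> 'b \<Rightarrow> 'c) \<Rightarrow> 't \<Rightarrow> 'c" where
  "tlift sT sC t f = (THE g. module_hom sT sC g \<and> (\<forall>a b. g (t a b) = f a b))"

definition tmult ::
  "('k::comm_ring_1 \<Rightarrow> 't::ab_group_add \<Rightarrow> 't) \<Rightarrow> ('a \<Rightarrow> 'b \<Rightarrow> 't) \<Rightarrow>
   ('a \<Rightarrow> 'a \<Rightarrow> 'a) \<Rightarrow> ('b \<Rightarrow> 'b \<Rightarrow> 'b) \<Rightarrow> 't \<Rightarrow> 't \<Rightarrow> 't" where
  "tmult sT t mA mB = (THE m. tbilinear sT sT sT m \<and>
      (\<forall>a b a' b'. m (t a b) (t a' b') = t (mA a a') (mB b b')))"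

definition k_algebra :: "('k::comm_ring_1 \<Rightarrow> 'a::ring_1 \<Rightarrow> 'a) \<Rightarrow> bool" where
  "k_algebra s \<longleftrightarrow> module s \<and>
     (\<forall>c a b. s c (a * b) = s c a * b \<and> s c (a * b) = a * s c b)"

text \<open>H with comultiplication dH : H -> H (x) H (tensor (tHH, sHH)),
counit eps : H -> k; H (x) H (x) H is modelled as (H (x) H) (x) H (tensor (tHHH, sHHH)).\<close>
definition hopf_algebra ::
  "('k::comm_ring_1 \<Rightarrow> 'h::ring_1 \<Rightarrow> 'h) \<Rightarrow>
   ('k \<Rightarrow> 'hh::ab_group_add \<Rightarrow> 'hh) \<Rightarrow> ('h \<Rightarrow> 'h \<Rightarrow> 'hh) \<Rightarrow>
   ('k \<Rightarrow> 'hhh::ab_group_add \<Rightarrow> 'hhh) \<Rightarrow> ('hh \<Rightarrow> 'h \<Rightarrow> 'hhh) \<Rightarrow>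
   ('h \<Rightarrow> 'hh) \<Rightarrow> ('h \<Rightarrow> 'k) \<Rightarrow> bool" where
  "hopf_algebra sH sHH tHH sHHH tHHH dH eps \<longleftrightarrow>
     k_algebra sH \<and> is_tensor sH sH sHH tHH \<and> is_tensor sHH sH sHHH tHHH \<and>
     module_hom sH sHH dH \<and>
     (\<forall>a b. dH (a * b) = tmult sHH tHH (*) (*) (dH a) (dH b)) \<and> dH 1 = tHH 1 1 \<and>
     (\<forall>h. tlift sHH sHHH tHH (\<lambda>a b. tHHH (dH a) b) (dH h) =
          tlift sHH sHHH tHH (\<lambda>a b. tlift sHH sHHH tHH (\<lambda>c d. tHHH (tHH a c) d) (dH b)) (dH h)) \<and>
     module_hom sH (*) eps \<and> (\<forall>a b. eps (a * b) = eps a * eps b) \<and> eps 1 = 1 \<and>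
     (\<forall>h. tlift sHH sH tHH (\<lambda>a b. sH (eps a) b) (dH h) = h) \<and>
     (\<forall>h. tlift sHH sH tHH (\<lambda>a b. sH (eps b) a) (dH h) = h) \<and>
     (\<exists>S. module_hom sH sH S \<and>
        (\<forall>h. tlift sHH sH tHH (\<lambda>a b. S a * b) (dH h) = sH (eps h) 1) \<and>
        (\<forall>h. tlift sHH sH tHH (\<lambda>a b. a * S b) (dH h) = sH (eps h) 1))"

text \<open>E (x) H is the tensor (tEH, sEH); E (x) H (x) H is modelled as (E (x) H) (x) H
(tensor (tEHH, sEHH)).\<close>

abbreviation multEH where "multEH sEH tEH \<equiv> tmult sEH tEH (*) (*)"
abbreviation multEHH where "multEHH sEH tEH sEHH tEHH \<equiv> tmult sEHH tEHH (multEH sEH tEH) (*)"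

definition coact_id where
  "coact_id sEH tEH sEHH tEHH rho = tlift sEH sEHH tEH (\<lambda>e h. tEHH (rho e) h)"

text \<open>(id (x) dH) : E (x) H -> E (x) H (x) H\<close>
definition id_comult where
  "id_comult sHH tHH dH sEH tEH sEHH tEHH =
     tlift sEH sEHH tEH (\<lambda>e h. tlift sHH sEHH tHH (\<lambda>b c. tEHH (tEH e b) c) (dH h))"

definition id_counit where
  "id_counit sE eps sEH tEH = tlift sEH sE tEH (\<lambda>e h. sE (eps h) e)"

definition comodule_algebra where
  "comodule_algebra sH sHH tHH dH eps sE sEH tEH sEHH tEHH dE \<longleftrightarrow>
     k_algebra sE \<and> is_tensor sE sH sEH tEH \<and> is_tensor sEH sH sEHH tEHH \<and>
     module_hom sE sEH dE \<and>
     (\<forall>x y. dE (x * y) = multEH sEH tEH (dE x) (dE y)) \<and> dE 1 = tEH 1 1 \<and>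
     (\<forall>x. coact_id sEH tEH sEHH tEHH dE (dE x) = id_comult sHH tHH dH sEH tEH sEHH tEHH (dE x)) \<and>
     (\<forall>x. id_counit sE eps sEH tEH (dE x) = x)"

definition hopf_module_E where
  "hopf_module_E sHH tHH dH eps sE sEH tEH sEHH tEHH dE rho \<longleftrightarrow>
     module_hom sE sEH rho \<and>
     (\<forall>m. coact_id sEH tEH sEHH tEHH rho (rho m) = id_comult sHH tHH dH sEH tEH sEHH tEHH (rho m)) \<and>
     (\<forall>m. id_counit sE eps sEH tEH (rho m) = m) \<and>
     (\<forall>m s. rho (m * s) = multEH sEH tEH (rho m) (dE s))"

definition hopf_module_E_hom where
  "hopf_module_E_hom sE sEH tEH rho1 rho2 f \<longleftrightarrow>
     module_hom sE sE f \<and> (\<forall>m s. f (m * s) = f m * s) \<and>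
     (\<forall>m. rho2 (f m) = tlift sEH sEH tEH (\<lambda>e h. tEH (f e) h) (rho1 m))"

definition hopf_module_E_iso where
  "hopf_module_E_iso sE sEH tEH rho1 rho2 \<longleftrightarrow>
     (\<exists>f g. hopf_module_E_hom sE sEH tEH rho1 rho2 f \<and> hopf_module_E_hom sE sEH tEH rho2 rho1 g \<and>
        (\<forall>x. g (f x) = x) \<and> (\<forall>y. f (g y) = y))"

definition units_EH where
  "units_EH sEH tEH = {X. \<exists>Y. multEH sEH tEH X Y = tEH 1 1 \<and> multEH sEH tEH Y X = tEH 1 1}"

definition twisted_coaction where
  "twisted_coaction sEH tEH dE X = (\<lambda>x. multEH sEH tEH X (dE x))"

definition hopf_Z1 where
  "hopf_Z1 sHH tHH dH sEH tEH sEHH tEHH dE =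
     {X \<in> units_EH sEH tEH.
        multEHH sEH tEH sEHH tEHH (tEHH X 1) (coact_id sEH tEH sEHH tEHH dE X) =
        id_comult sHH tHH dH sEH tEH sEHH tEHH X}"

text \<open>X' = d1(x^-1) X d0(x) for a unit x of E with inverse y.\<close>
definition cohomologous where
  "cohomologous sEH tEH dE X X' \<longleftrightarrow>
     (\<exists>x y::'e::ring_1. x * y = 1 \<and> y * x = 1 \<and>
        X' = multEH sEH tEH (multEH sEH tEH (tEH y 1) X) (dE x))"

end

theory Submission
  imports Defs
begin

(* Part (1) then follows because
   collapsing the cocycle equation gives X dE(U X) = X for U = id (x) eps, forcing U X = 1.  Part (2) follows
   because every right E-linear map E -> E is left multiplication by f 1, and left
   multiplication by a is a Hopf-module map (E, Y) -> (E, Y') iff  Y' dE(a) = (a (x) 1) Y,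
   which for a unit a is exactly the cohomology relation. *)

section \<open>The canonical map from the free module onto a tensor product\<close>

abbreviation supp :: "('p \<Rightarrow> 'k::zero) \<Rightarrow> 'p set" where "supp F \<equiv> {p. F p \<noteq> 0}"

lemma finite_supp_add: "finite (supp (F :: 'p \<Rightarrow> 'k::comm_ring_1)) \<Longrightarrow> finite (supp G) \<Longrightarrow> finite (supp (F + G))"
  by (rule finite_subset[of _ "supp F \<union> supp G"]) auto

lemma finite_supp_diff: "finite (supp (F :: 'p \<Rightarrow> 'k::comm_ring_1)) \<Longrightarrow> finite (supp G) \<Longrightarrow> finite (supp (F - G))"
  by (rule finite_subset[of _ "supp F \<union> supp G"]) auto

lemma finite_supp_scale: "finite (supp F) \<Longrightarrow> finite (supp (\<lambda>q. (c::'k::comm_ring_1) * F q))"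
  by (rule finite_subset[of _ "supp F"]) auto

lemma finite_supp_fdelta: "finite (supp (fdelta p :: _ \<Rightarrow> 'k::comm_ring_1))"
  by (rule finite_subset[of _ "{p}"]) (auto simp: fdelta_def)

lemma canon_superset:
  assumes "module sT" "finite S" "supp F \<subseteq> S"
  shows "tensor_canon sT t F = (\<Sum>p\<in>S. sT (F p) (t (fst p) (snd p)))"
  unfolding tensor_canon_def
  by (rule sum.mono_neutral_left) (use assms module.scale_zero_left[OF assms(1)] in auto)

lemma canon_add:
  assumes mT: "module sT" and F: "finite (supp F)" and G: "finite (supp G)"
  shows "tensor_canon sT t (F + G) = tensor_canon sT t F + tensor_canon sT t G"
proof -
  let ?S = "supp F \<union> supp G"
  have "supp (F + G) \<subseteq> ?S" by auto
  then have "tensor_canon sT t (F + G) = (\<Sum>p\<in>?S. sT (F p + G p) (t (fst p) (snd p)))"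
    using canon_superset[OF mT, of ?S "F + G"] F G by simp
  also have "\<dots> = (\<Sum>p\<in>?S. sT (F p) (t (fst p) (snd p))) + (\<Sum>p\<in>?S. sT (G p) (t (fst p) (snd p)))"
    by (simp add: module.scale_left_distrib[OF mT] sum.distrib)
  also have "\<dots> = tensor_canon sT t F + tensor_canon sT t G"
    using canon_superset[OF mT, of ?S F] canon_superset[OF mT, of ?S G] F G by auto
  finally show ?thesis .
qed

lemma canon_scale:
  assumes mT: "module sT" and F: "finite (supp F)"
  shows "tensor_canon sT t (\<lambda>q. c * F q) = sT c (tensor_canon sT t F)"
proof -
  have sub: "supp (\<lambda>q. c * F q) \<subseteq> supp F" by auto
  have "tensor_canon sT t (\<lambda>q. c * F q) = (\<Sum>p\<in>supp F. sT (c * F p) (t (fst p) (snd p)))"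
    by (rule canon_superset[OF mT F sub])
  then show ?thesis
    unfolding tensor_canon_def
    by (simp add: module.scale_sum_right[OF mT] module.scale_scale[OF mT])
qed

lemma canon_diff:
  assumes mT: "module sT" and F: "finite (supp F)" and G: "finite (supp G)"
  shows "tensor_canon sT t (F - G) = tensor_canon sT t F - tensor_canon sT t G"
proof -
  have split: "F - G = F + (\<lambda>q. (-1) * G q)" by (simp add: fun_eq_iff)
  show ?thesis
    unfolding split canon_add[OF mT F finite_supp_scale[OF G]] canon_scale[OF mT G]
    by (simp add: module.scale_minus_left[OF mT] module.scale_one[OF mT])
qed

lemma canon_fdelta:
  assumes "module sT"
  shows "tensor_canon sT t (fdelta p) = t (fst p) (snd p)"
  using canon_superset[OF assms, of "{p}" "fdelta p" t]
  by (simp add: fdelta_def module.scale_one[OF assms])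

lemma tbilD:
  assumes "tbilinear sA sB sC f"
  shows "module_hom sB sC (f a)" "module_hom sA sC (\<lambda>a. f a b)"
  using assms unfolding tbilinear_def by blast+

lemma tbilI:
  assumes "\<And>a. module_hom sB sC (f a)" "\<And>b. module_hom sA sC (\<lambda>a. f a b)"
  shows "tbilinear sA sB sC f"
  using assms unfolding tbilinear_def by blast

lemma canon_rels:
  assumes mC: "module sC" and fb: "tbilinear sA sB sC f" and F: "F \<in> tensor_rels sA sB"
  shows "finite (supp F) \<and> tensor_canon sC f F = 0"
proof -
  note lin1 = tbilD(2)[OF fb] and lin2 = tbilD(1)[OF fb]
  have three: "finite (supp (fdelta p - fdelta q - fdelta r)) \<and>
      tensor_canon sC f (fdelta p - fdelta q - fdelta r) =
      f (fst p) (snd p) - f (fst q) (snd q) - f (fst r) (snd r)" for p q r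
    by (simp only: finite_supp_diff finite_supp_fdelta canon_diff[OF mC] canon_fdelta[OF mC])
  have scaled: "finite (supp (fdelta p - (\<lambda>q. c * fdelta r q))) \<and>
      tensor_canon sC f (fdelta p - (\<lambda>q. c * fdelta r q)) = f (fst p) (snd p) - sC c (f (fst r) (snd r))"
    for p r c
    by (simp only: finite_supp_diff finite_supp_scale finite_supp_fdelta canon_diff[OF mC]
        canon_scale[OF mC] canon_fdelta[OF mC])
  from F consider
      (add_left) a a' b where "F = fdelta (a + a', b) - fdelta (a, b) - fdelta (a', b)"
    | (add_right) a b b' where "F = fdelta (a, b + b') - fdelta (a, b) - fdelta (a, b')"
    | (scale_left) c a b where "F = fdelta (sA c a, b) - (\<lambda>q. c * fdelta (a, b) q)"
    | (scale_right) c a b where "F = fdelta (a, sB c b) - (\<lambda>q. c * fdelta (a, b) q)"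
    unfolding tensor_rels_def by auto
  then show ?thesis
  proof cases
    case add_left
    then show ?thesis using three[of "(a + a', b)" "(a, b)" "(a', b)"] by (simp add: module_hom.add[OF lin1])
  next
    case add_right
    then show ?thesis using three[of "(a, b + b')" "(a, b)" "(a, b')"] by (simp add: module_hom.add[OF lin2])
  next
    case scale_left
    then show ?thesis using scaled[of "(sA c a, b)" c "(a, b)"] by (simp add: module_hom.scale[OF lin1])
  next
    case scale_right
    then show ?thesis using scaled[of "(a, sB c b)" c "(a, b)"] by (simp add: module_hom.scale[OF lin2])
  qed
qed

lemma canon_span:
  assumes mC: "module sC" and fb: "tbilinear sA sB sC f"
    and F: "F \<in> module.span (\<lambda>c g q. c * g q) (tensor_rels sA sB)"
  shows "finite (supp F) \<and> tensor_canon sC f F = 0"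
proof -
  have mF: "module (\<lambda>c g q. (c::'k::comm_ring_1) * g q)"
    by unfold_locales (auto simp: fun_eq_iff algebra_simps)
  show ?thesis
  proof (rule module.span_induct[OF mF F])
    show "module.subspace (\<lambda>c g q. c * g q) {F. finite (supp F) \<and> tensor_canon sC f F = 0}"
    proof (rule module.subspaceI[OF mF])
      show "0 \<in> {F. finite (supp F) \<and> tensor_canon sC f F = 0}"
        by (simp add: tensor_canon_def)
    next
      fix F G assume "F \<in> {F. finite (supp F) \<and> tensor_canon sC f F = 0}"
        and "G \<in> {F. finite (supp F) \<and> tensor_canon sC f F = 0}"
      then show "F + G \<in> {F. finite (supp F) \<and> tensor_canon sC f F = 0}"
        using finite_supp_add[of F G] canon_add[OF mC, of F G f] by simp
    next
      fix c F assume "F \<in> {F. finite (supp F) \<and> tensor_canon sC f F = 0}"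
      then show "(\<lambda>q. c * F q) \<in> {F. finite (supp F) \<and> tensor_canon sC f F = 0}"
        by (simp add: finite_supp_scale canon_scale[OF mC] module.scale_zero_right[OF mC])
    qed
  qed (rule canon_rels[OF mC fb])
qed

section \<open>The universal property of the tensor product\<close>

lemma hom_comp: "module_hom s1 s2 f \<Longrightarrow> module_hom s2 s3 g \<Longrightarrow> module_hom s1 s3 (\<lambda>x. g (f x))"
  using module_hom_compose[of s1 s2 f s3 g] by (simp add: comp_def)

lemma hom_canon:
  assumes g: "module_hom sT sC g"
  shows "g (tensor_canon sT t F) = tensor_canon sC (\<lambda>a b. g (t a b)) F"
  unfolding tensor_canon_def by (simp add: module_hom.sum[OF g] module_hom.scale[OF g])

lemma is_tensorD:
  assumes "is_tensor sA sB sT t"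
  shows "module sA" "module sB" "module sT" "tbilinear sA sB sT t"
    "\<exists>F. finite (supp F) \<and> z = tensor_canon sT t F"
    "finite (supp F) \<Longrightarrow> tensor_canon sT t F = 0 \<Longrightarrow> F \<in> module.span (\<lambda>c g q. c * g q) (tensor_rels sA sB)"
  using assms unfolding is_tensor_def by blast+

lemma tensor_hom_eq:
  assumes T: "is_tensor sA sB sT t" and g1: "module_hom sT sC g1" and g2: "module_hom sT sC g2"
    and eq: "\<And>a b. g1 (t a b) = g2 (t a b)"
  shows "g1 z = g2 z"
proof -
  from is_tensorD(5)[OF T] obtain F where F: "z = tensor_canon sT t F" by blast
  have "(\<lambda>a b. g1 (t a b)) = (\<lambda>a b. g2 (t a b))" using eq by auto
  then show ?thesis unfolding F hom_canon[OF g1] hom_canon[OF g2] by simp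
qed

(* A bilinear map f induces a well-defined map on the tensor product: representations of the
   same element have the same image under tensor_canon sC f, since f kills all relations. *)
lemma canon_well_defined:
  assumes T: "is_tensor sA sB sT t" and mC: "module sC" and fb: "tbilinear sA sB sC f"
    and F: "finite (supp F)" and G: "finite (supp G)" and e: "tensor_canon sT t F = tensor_canon sT t G"
  shows "tensor_canon sC f F = tensor_canon sC f G"
proof -
  have mT: "module sT" using is_tensorD[OF T] by blast
  have "tensor_canon sT t (F - G) = 0" using canon_diff[OF mT F G] e by simp
  then have "tensor_canon sC f (F - G) = 0"
    using canon_span[OF mC fb is_tensorD(6)[OF T finite_supp_diff[OF F G]]] by blast
  then show ?thesis using canon_diff[OF mC F G] by simp
qed

(* Existence half of the universal property: a bilinear map f factors through t.  The factoring
   map sends the class of a finitely supported F to tensor_canon sC f F. *)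
lemma tensor_ex_lift:
  assumes T: "is_tensor sA sB sT t" and mC: "module sC" and fb: "tbilinear sA sB sC f"
  shows "\<exists>g. module_hom sT sC g \<and> (\<forall>a b. g (t a b) = f a b)"
proof -
  have mT: "module sT" using is_tensorD[OF T] by blast
  define R where "R z = (SOME F. finite (supp F) \<and> z = tensor_canon sT t F)" for z
  have R: "finite (supp (R z)) \<and> z = tensor_canon sT t (R z)" for z
    using someI_ex[OF is_tensorD(5)[OF T, where z=z]] by (simp add: R_def)
  define g where "g z = tensor_canon sC f (R z)" for z
  have g_canon: "g (tensor_canon sT t F) = tensor_canon sC f F" if "finite (supp F)" for F
    unfolding g_def by (rule canon_well_defined[OF T mC fb]) (use R that in auto)
  have "module_hom sT sC g"
    unfolding module_hom_iff
  proof (intro conjI allI mT mC)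
    fix x y
    obtain F G where F: "finite (supp F)" "x = tensor_canon sT t F"
      and G: "finite (supp G)" "y = tensor_canon sT t G"
      using is_tensorD(5)[OF T] by metis
    have "g (x + y) = g (tensor_canon sT t (F + G))" using canon_add[OF mT F(1) G(1)] F G by simp
    also have "\<dots> = tensor_canon sC f (F + G)" by (rule g_canon[OF finite_supp_add[OF F(1) G(1)]])
    also have "\<dots> = g x + g y" using canon_add[OF mC F(1) G(1)] g_canon[OF F(1)] g_canon[OF G(1)] F G by simp
    finally show "g (x + y) = g x + g y" .
  next
    fix c x
    obtain F where F: "finite (supp F)" "x = tensor_canon sT t F"
      using is_tensorD(5)[OF T] by metis
    have "sT c x = tensor_canon sT t (\<lambda>q. c * F q)" using canon_scale[OF mT F(1)] F by simp
    then show "g (sT c x) = sC c (g x)"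
      using g_canon[OF finite_supp_scale[OF F(1)]] g_canon[OF F(1)] canon_scale[OF mC F(1)] F by simp
  qed
  moreover have "g (t a b) = f a b" for a b
    using g_canon[OF finite_supp_fdelta[of "(a, b)"]] by (simp add: canon_fdelta[OF mT] canon_fdelta[OF mC])
  ultimately show ?thesis by blast
qed

(* Uniqueness follows since pure tensors generate. *)
lemma tlift_ex1:
  assumes T: "is_tensor sA sB sT t" and mC: "module sC" and fb: "tbilinear sA sB sC f"
  shows "\<exists>!g. module_hom sT sC g \<and> (\<forall>a b. g (t a b) = f a b)"
proof -
  obtain g where g: "module_hom sT sC g \<and> (\<forall>a b. g (t a b) = f a b)"
    using tensor_ex_lift[OF assms] by blast
  show ?thesis
  proof (rule ex1I[of _ g])
    fix h assume h: "module_hom sT sC h \<and> (\<forall>a b. h (t a b) = f a b)"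
    show "h = g" by (rule ext, rule tensor_hom_eq[OF T]) (use g h in auto)
  qed (rule g)
qed

lemma tlift:
  assumes T: "is_tensor sA sB sT t" and mC: "module sC" and fb: "tbilinear sA sB sC f"
  shows tlift_hom: "module_hom sT sC (tlift sT sC t f)"
    and tlift_gen: "tlift sT sC t f (t a b) = f a b"
  using theI'[OF tlift_ex1[OF assms]] unfolding tlift_def by blast+

lemma tlift_linear_in_parameter:
  assumes T: "is_tensor sA sB sT t" and mC: "module sC" and mX: "module sX"
    and fb: "\<And>x. tbilinear sA sB sC (f x)" and fx: "\<And>a b. module_hom sX sC (\<lambda>x. f x a b)"
  shows "module_hom sX sC (\<lambda>x. tlift sT sC t (f x) z)"
proof -
  have mT: "module sT" using is_tensorD[OF T] by blast
  interpret mp: module_pair sT sC by (simp add: module_pair_def mT mC)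
  note lift_hom = tlift_hom[OF T mC fb] and lift_gen = tlift_gen[OF T mC fb]
  have "tlift sT sC t (f (x + y)) z = tlift sT sC t (f x) z + tlift sT sC t (f y) z" for x y
    by (rule tensor_hom_eq[OF T lift_hom mp.module_hom_add[OF lift_hom lift_hom]])
      (simp add: lift_gen module_hom.add[OF fx])
  moreover have "tlift sT sC t (f (sX c x)) z = sC c (tlift sT sC t (f x) z)" for c x
    by (rule tensor_hom_eq[OF T lift_hom mp.module_hom_scale[OF lift_hom]])
      (simp add: lift_gen module_hom.scale[OF fx])
  ultimately show ?thesis by (simp add: module_hom_iff mX mC)
qed

lemma bil_eq:
  assumes T1: "is_tensor sA sB sT t" and T2: "is_tensor sA' sB' sT' t'"
    and b1: "tbilinear sT sT' sC m1" and b2: "tbilinear sT sT' sC m2"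
    and eq: "\<And>a b a' b'. m1 (t a b) (t' a' b') = m2 (t a b) (t' a' b')"
  shows "m1 u v = m2 u v"
proof -
  have "m1 (t a b) v = m2 (t a b) v" for a b
    by (rule tensor_hom_eq[OF T2 tbilD(1)[OF b1] tbilD(1)[OF b2]]) (rule eq)
  then show ?thesis
    by (rule tensor_hom_eq[OF T1 tbilD(2)[OF b1] tbilD(2)[OF b2], where z=u])
qed

section \<open>The algebra structure on a tensor product\<close>

lemma bil_comp_out:
  "tbilinear s1 s2 s3 m \<Longrightarrow> module_hom s3 s4 f \<Longrightarrow> tbilinear s1 s2 s4 (\<lambda>u v. f (m u v))"
  by (rule tbilI) (auto intro: hom_comp dest: tbilD)

lemma bil_comp_in:
  "tbilinear s1 s2 s3 m \<Longrightarrow> module_hom s0 s1 f \<Longrightarrow> module_hom s0' s2 g \<Longrightarrow>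
   tbilinear s0 s0' s3 (\<lambda>u v. m (f u) (g v))"
  by (rule tbilI) (auto intro: hom_comp dest: tbilD)

lemma ring_bil:
  fixes s :: "'k::comm_ring_1 \<Rightarrow> 'a::ring_1 \<Rightarrow> 'a"
  assumes "k_algebra s" shows "tbilinear s s s (*)"
proof -
  have m: "module s" and c: "\<And>c a b. s c (a * b) = s c a * b \<and> s c (a * b) = a * s c b"
    using assms unfolding k_algebra_def by blast+
  have "s c a * b = s c (a * b)" "a * s c b = s c (a * b)" for c a b using c by metis+
  then show ?thesis
    by (intro tbilI) (simp_all add: module_hom_iff m distrib_left distrib_right)
qed

(* Existence of the product (a (x) b)(a' (x) b') = aa' (x) bb':  first lift in (a', b') for fixed
   (a, b), then lift the result, which is bilinear in (a, b), once more. *)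
lemma tmult_ex:
  assumes T: "is_tensor sA sB sT t" and bA: "tbilinear sA sA sA mA" and bB: "tbilinear sB sB sB mB"
  shows "\<exists>m. tbilinear sT sT sT m \<and> (\<forall>a b a' b'. m (t a b) (t a' b') = t (mA a a') (mB b b'))"
proof -
  note tb = is_tensorD(4)[OF T]
  have mT: "module sT" and mA: "module sA" and mB: "module sB" using is_tensorD[OF T] by blast+
  have right_factor: "tbilinear sA sB sT (\<lambda>a' b'. t (mA a a') (mB b b'))" for a b
    by (rule tbilI) (auto intro: hom_comp tbilD[OF bA] tbilD[OF bB] tbilD[OF tb])
  define L where "L a b = tlift sT sT t (\<lambda>a' b'. t (mA a a') (mB b b'))" for a b
  have L_gen: "L a b (t a' b') = t (mA a a') (mB b b')" for a b a' b'
    unfolding L_def by (rule tlift_gen[OF T mT right_factor])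
  have L_bil: "tbilinear sA sB sT (\<lambda>a b. L a b v)" for v
    unfolding L_def
    by (rule tbilI; rule tlift_linear_in_parameter[OF T mT, OF _ right_factor])
      (auto intro: hom_comp tbilD[OF bA] tbilD[OF bB] tbilD[OF tb] mA mB)
  define m where "m u v = tlift sT sT t (\<lambda>a b. L a b v) u" for u v
  have "tbilinear sT sT sT m"
  proof (rule tbilI)
    fix u show "module_hom sT sT (m u)"
      unfolding m_def
      by (rule tlift_linear_in_parameter[OF T mT mT L_bil])
        (simp add: L_def tlift_hom[OF T mT right_factor])
  next
    fix v show "module_hom sT sT (\<lambda>u. m u v)"
      unfolding m_def by (rule tlift_hom[OF T mT L_bil])
  qed
  moreover have "m (t a b) (t a' b') = t (mA a a') (mB b b')" for a b a' b'
    unfolding m_def tlift_gen[OF T mT L_bil] by (rule L_gen)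
  ultimately show ?thesis by blast
qed

lemma tmult_ex1:
  assumes T: "is_tensor sA sB sT t" and bA: "tbilinear sA sA sA mA" and bB: "tbilinear sB sB sB mB"
  shows "\<exists>!m. tbilinear sT sT sT m \<and> (\<forall>a b a' b'. m (t a b) (t a' b') = t (mA a a') (mB b b'))"
proof -
  obtain m where m: "tbilinear sT sT sT m \<and> (\<forall>a b a' b'. m (t a b) (t a' b') = t (mA a a') (mB b b'))"
    using tmult_ex[OF assms] by blast
  show ?thesis
  proof (rule ex1I[of _ m])
    fix h assume h: "tbilinear sT sT sT h \<and> (\<forall>a b a' b'. h (t a b) (t a' b') = t (mA a a') (mB b b'))"
    show "h = m" by (intro ext, rule bil_eq[OF T T]) (use m h in auto)
  qed (rule m)
qed

lemma tmult:
  assumes T: "is_tensor sA sB sT t" and bA: "tbilinear sA sA sA mA" and bB: "tbilinear sB sB sB mB"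
  shows tmult_bil: "tbilinear sT sT sT (tmult sT t mA mB)"
    and tmult_gen: "tmult sT t mA mB (t a b) (t a' b') = t (mA a a') (mB b b')"
  using theI'[OF tmult_ex1[OF assms]] unfolding tmult_def by blast+

lemma tmult_assoc:
  assumes T: "is_tensor sA sB sT t" and bA: "tbilinear sA sA sA mA" and bB: "tbilinear sB sB sB mB"
    and aA: "\<And>x y z. mA (mA x y) z = mA x (mA y z)" and aB: "\<And>x y z. mB (mB x y) z = mB x (mB y z)"
  shows "tmult sT t mA mB (tmult sT t mA mB u v) w = tmult sT t mA mB u (tmult sT t mA mB v w)"
proof -
  define m where "m = tmult sT t mA mB"
  have mb: "tbilinear sT sT sT m" unfolding m_def by (rule tmult_bil[OF T bA bB])
  have mg: "m (t a b) (t a' b') = t (mA a a') (mB b b')" for a b a' b'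
    unfolding m_def by (rule tmult_gen[OF T bA bB])
  note l1 = tbilD(1)[OF mb] and l2 = tbilD(2)[OF mb]
  have "m (m (t a b) (t a' b')) w = m (t a b) (m (t a' b') w)" for a b a' b' w
    by (rule tensor_hom_eq[OF T l1 hom_comp[OF l1 l1]]) (simp add: mg aA aB)
  then have "m (m (t a b) v) w = m (t a b) (m v w)" for a b v w
    by (rule tensor_hom_eq[OF T hom_comp[OF l1 l2] hom_comp[OF l2 l1], where z=v])
  then have "m (m u v) w = m u (m v w)"
    by (rule tensor_hom_eq[OF T hom_comp[OF l2 l2] l2, where z=u])
  then show ?thesis unfolding m_def .
qed

lemma tmult_unit:
  assumes T: "is_tensor sA sB sT t" and bA: "tbilinear sA sA sA mA" and bB: "tbilinear sB sB sB mB"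
    and uA: "\<And>x. mA eA x = x \<and> mA x eA = x" and uB: "\<And>x. mB eB x = x \<and> mB x eB = x"
  shows "tmult sT t mA mB (t eA eB) u = u" and "tmult sT t mA mB u (t eA eB) = u"
proof -
  note mb = tmult_bil[OF T bA bB] and mg = tmult_gen[OF T bA bB]
  have mT: "module sT" using is_tensorD[OF T] by blast
  have "tmult sT t mA mB (t eA eB) u = id u"
    by (rule tensor_hom_eq[OF T tbilD(1)[OF mb] module.module_hom_id[OF mT]]) (simp add: mg uA uB)
  then show "tmult sT t mA mB (t eA eB) u = u" by simp
  have "tmult sT t mA mB u (t eA eB) = id u"
    by (rule tensor_hom_eq[OF T tbilD(2)[OF mb] module.module_hom_id[OF mT]]) (simp add: mg uA uB)
  then show "tmult sT t mA mB u (t eA eB) = u" by simp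
qed

section \<open>The structure maps of a comodule algebra\<close>

(* Only the parts of the Hopf algebra axioms the argument needs are assumed. *)
locale comodule_algebra_setting =
  fixes sH :: "'k::comm_ring_1 \<Rightarrow> 'h::ring_1 \<Rightarrow> 'h"
    and sHH :: "'k \<Rightarrow> 'hh::ab_group_add \<Rightarrow> 'hh" and tHH :: "'h \<Rightarrow> 'h \<Rightarrow> 'hh"
    and dH :: "'h \<Rightarrow> 'hh" and eps :: "'h \<Rightarrow> 'k"
    and sE :: "'k \<Rightarrow> 'e::ring_1 \<Rightarrow> 'e"
    and sEH :: "'k \<Rightarrow> 'eh::ab_group_add \<Rightarrow> 'eh" and tEH :: "'e \<Rightarrow> 'h \<Rightarrow> 'eh"
    and sEHH :: "'k \<Rightarrow> 'ehh::ab_group_add \<Rightarrow> 'ehh" and tEHH :: "'eh \<Rightarrow> 'h \<Rightarrow> 'ehh"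
    and dE :: "'e \<Rightarrow> 'eh"
  assumes kH: "k_algebra sH" and THH: "is_tensor sH sH sHH tHH"
    and dH_lin: "module_hom sH sHH dH"
    and dH_mult: "\<And>a b. dH (a * b) = tmult sHH tHH (*) (*) (dH a) (dH b)"
    and eps_lin: "module_hom sH (*) eps" and eps_mult: "\<And>a b. eps (a * b) = eps a * eps b"
    and eps_1: "eps 1 = 1"
    and counit_H: "\<And>h. tlift sHH sH tHH (\<lambda>a b. sH (eps b) a) (dH h) = h"
    and kE: "k_algebra sE" and TEH: "is_tensor sE sH sEH tEH" and TEHH: "is_tensor sEH sH sEHH tEHH"
    and dE_lin: "module_hom sE sEH dE"
    and dE_mult: "\<And>x y. dE (x * y) = multEH sEH tEH (dE x) (dE y)" and dE_1: "dE 1 = tEH 1 1"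
    and coassoc_E: "\<And>x. coact_id sEH tEH sEHH tEHH dE (dE x) = id_comult sHH tHH dH sEH tEH sEHH tEHH (dE x)"
    and counit_E: "\<And>x. id_counit sE eps sEH tEH (dE x) = x"
begin

abbreviation "mEH \<equiv> multEH sEH tEH"
abbreviation "mEHH \<equiv> multEHH sEH tEH sEHH tEHH"
abbreviation "mHH \<equiv> tmult sHH tHH (*) (*)"

lemma modules: "module sE" "module sH" "module sEH" "module sEHH" "module sHH"
  using is_tensorD[OF TEH] is_tensorD[OF TEHH] is_tensorD[OF THH] by blast+

lemma bE: "tbilinear sE sE sE (*)" by (rule ring_bil[OF kE])
lemma bH: "tbilinear sH sH sH (*)" by (rule ring_bil[OF kH])
lemma tEH_bil: "tbilinear sE sH sEH tEH" by (rule is_tensorD(4)[OF TEH])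
lemma tEHH_bil: "tbilinear sEH sH sEHH tEHH" by (rule is_tensorD(4)[OF TEHH])

lemma mEH_bil: "tbilinear sEH sEH sEH mEH" by (rule tmult_bil[OF TEH bE bH])
lemma mEH_gen: "mEH (tEH a b) (tEH a' b') = tEH (a * a') (b * b')" by (rule tmult_gen[OF TEH bE bH])
lemma mEH_assoc: "mEH (mEH u v) w = mEH u (mEH v w)"
  by (rule tmult_assoc[OF TEH bE bH]) (simp_all add: mult.assoc)
lemma mEH_unit_left: "mEH (tEH 1 1) u = u" by (rule tmult_unit(1)[OF TEH bE bH]) auto
lemma mEH_unit_right: "mEH u (tEH 1 1) = u" by (rule tmult_unit(2)[OF TEH bE bH]) auto

lemma mEHH_bil: "tbilinear sEHH sEHH sEHH mEHH" by (rule tmult_bil[OF TEHH mEH_bil bH])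
lemma mEHH_gen: "mEHH (tEHH u h) (tEHH u' h') = tEHH (mEH u u') (h * h')"
  by (rule tmult_gen[OF TEHH mEH_bil bH])
lemma mEHH_assoc: "mEHH (mEHH u v) w = mEHH u (mEHH v w)"
  by (rule tmult_assoc[OF TEHH mEH_bil bH]) (simp_all add: mEH_assoc mult.assoc)

lemma mHH_bil: "tbilinear sHH sHH sHH mHH" by (rule tmult_bil[OF THH bH bH])
lemma mHH_gen: "mHH (tHH a b) (tHH a' b') = tHH (a * a') (b * b')" by (rule tmult_gen[OF THH bH bH])

lemma eps_scale_hom: "module s \<Longrightarrow> module_hom sH s (\<lambda>h. s (eps h) x)"
  by (rule hom_comp[OF eps_lin module.module_hom_scale_left])

abbreviation "U \<equiv> id_counit sE eps sEH tEH"

lemma U_bil: "tbilinear sE sH sE (\<lambda>e h. sE (eps h) e)"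
  by (rule tbilI) (simp_all add: eps_scale_hom modules module.module_hom_scale_self[OF modules(1)])
lemma U_hom: "module_hom sEH sE U" unfolding id_counit_def by (rule tlift_hom[OF TEH modules(1) U_bil])
lemma U_gen: "U (tEH e h) = sE (eps h) e" unfolding id_counit_def by (rule tlift_gen[OF TEH modules(1) U_bil])

lemma U_mult: "U (mEH u v) = U u * U v"
proof (rule bil_eq[OF TEH TEH bil_comp_out[OF mEH_bil U_hom] bil_comp_in[OF bE U_hom U_hom]])
  have "sE c a * b = sE c (a * b)" "a * sE c b = sE c (a * b)" for c a b
    using kE unfolding k_algebra_def by metis+
  then show "U (mEH (tEH a b) (tEH a' b')) = U (tEH a b) * U (tEH a' b')" for a b a' b'
    by (simp add: mEH_gen U_gen eps_mult module.scale_scale[OF modules(1)] mult.commute)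
qed

lemma coact_bil: "module_hom sE sEH rho \<Longrightarrow> tbilinear sE sH sEHH (\<lambda>e h. tEHH (rho e) h)"
  by (rule tbilI) (auto intro: hom_comp tbilD[OF tEHH_bil])
lemma coact_hom: "module_hom sE sEH rho \<Longrightarrow> module_hom sEH sEHH (coact_id sEH tEH sEHH tEHH rho)"
  unfolding coact_id_def by (rule tlift_hom[OF TEH modules(4) coact_bil])
lemma coact_gen: "module_hom sE sEH rho \<Longrightarrow> coact_id sEH tEH sEHH tEHH rho (tEH e h) = tEHH (rho e) h"
  unfolding coact_id_def by (rule tlift_gen[OF TEH modules(4) coact_bil])

abbreviation "C \<equiv> coact_id sEH tEH sEHH tEHH dE"
lemma C_hom: "module_hom sEH sEHH C" by (rule coact_hom[OF dE_lin])
lemma C_gen: "C (tEH e h) = tEHH (dE e) h" by (rule coact_gen[OF dE_lin])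

lemma C_mult: "C (mEH u v) = mEHH (C u) (C v)"
proof (rule bil_eq[OF TEH TEH bil_comp_out[OF mEH_bil C_hom] bil_comp_in[OF mEHH_bil C_hom C_hom]])
  show "C (mEH (tEH a b) (tEH a' b')) = mEHH (C (tEH a b)) (C (tEH a' b'))" for a b a' b'
    by (simp add: mEH_gen C_gen mEHH_gen dE_mult)
qed

definition phi where "phi e = tlift sHH sEHH tHH (\<lambda>b c. tEHH (tEH e b) c)"

lemma phi_bil: "tbilinear sH sH sEHH (\<lambda>b c. tEHH (tEH e b) c)"
  by (rule tbilI) (auto intro: hom_comp tbilD[OF tEHH_bil] tbilD[OF tEH_bil])
lemma phi_hom: "module_hom sHH sEHH (phi e)" unfolding phi_def by (rule tlift_hom[OF THH modules(4) phi_bil])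
lemma phi_gen: "phi e (tHH b c) = tEHH (tEH e b) c" unfolding phi_def by (rule tlift_gen[OF THH modules(4) phi_bil])

lemma phi_lin_e: "module_hom sE sEHH (\<lambda>e. phi e w)"
  unfolding phi_def
  by (rule tlift_linear_in_parameter[OF THH modules(4) modules(1) phi_bil])
    (auto intro: hom_comp tbilD[OF tEH_bil] tbilD[OF tEHH_bil])

lemma phi_mult: "phi (e * e') (mHH u v) = mEHH (phi e u) (phi e' v)"
proof (rule bil_eq[OF THH THH bil_comp_out[OF mHH_bil phi_hom] bil_comp_in[OF mEHH_bil phi_hom phi_hom]])
  show "phi (e * e') (mHH (tHH a b) (tHH a' b')) = mEHH (phi e (tHH a b)) (phi e' (tHH a' b'))" for a b a' b'
    by (simp add: mHH_gen phi_gen mEHH_gen mEH_gen)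
qed

abbreviation "D \<equiv> id_comult sHH tHH dH sEH tEH sEHH tEHH"

lemma D_bil: "tbilinear sE sH sEHH (\<lambda>e h. phi e (dH h))"
  by (rule tbilI) (auto intro: hom_comp[OF dH_lin phi_hom] phi_lin_e)
lemma D_eq: "D = tlift sEH sEHH tEH (\<lambda>e h. phi e (dH h))"
  unfolding id_comult_def phi_def ..
lemma D_hom: "module_hom sEH sEHH D" unfolding D_eq by (rule tlift_hom[OF TEH modules(4) D_bil])
lemma D_gen: "D (tEH e h) = phi e (dH h)" unfolding D_eq by (rule tlift_gen[OF TEH modules(4) D_bil])

lemma D_mult: "D (mEH u v) = mEHH (D u) (D v)"
proof (rule bil_eq[OF TEH TEH bil_comp_out[OF mEH_bil D_hom] bil_comp_in[OF mEHH_bil D_hom D_hom]])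
  show "D (mEH (tEH a b) (tEH a' b')) = mEHH (D (tEH a b)) (D (tEH a' b'))" for a b a' b'
    by (simp add: mEH_gen D_gen dH_mult phi_mult)
qed

definition psi where "psi = tlift sEHH sEH tEHH (\<lambda>u h. sEH (eps h) u)"

lemma psi_bil: "tbilinear sEH sH sEH (\<lambda>u h. sEH (eps h) u)"
  by (rule tbilI) (simp_all add: eps_scale_hom modules module.module_hom_scale_self[OF modules(3)])
lemma psi_hom: "module_hom sEHH sEH psi" unfolding psi_def by (rule tlift_hom[OF TEHH modules(3) psi_bil])
lemma psi_gen: "psi (tEHH u h) = sEH (eps h) u" unfolding psi_def by (rule tlift_gen[OF TEHH modules(3) psi_bil])

lemma psi_mult: "psi (mEHH x y) = mEH (psi x) (psi y)"
proof (rule bil_eq[OF TEHH TEHH bil_comp_out[OF mEHH_bil psi_hom] bil_comp_in[OF mEH_bil psi_hom psi_hom]])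
  show "psi (mEHH (tEHH a b) (tEHH a' b')) = mEH (psi (tEHH a b)) (psi (tEHH a' b'))" for a b a' b'
    by (simp add: mEHH_gen psi_gen eps_mult module_hom.scale[OF tbilD(1)[OF mEH_bil]]
        module_hom.scale[OF tbilD(2)[OF mEH_bil]] module.scale_scale[OF modules(3)] mult.commute)
qed

lemma psi_left_factor: "psi (tEHH X 1) = X"
  by (simp add: psi_gen eps_1 module.scale_one[OF modules(3)])

lemma psi_C: "psi (C Z) = dE (U Z)"
  by (rule tensor_hom_eq[OF TEH hom_comp[OF C_hom psi_hom] hom_comp[OF U_hom dE_lin]])
    (simp add: C_gen psi_gen U_gen module_hom.scale[OF dE_lin])

lemma psi_D: "psi (D Z) = Z"
proof -
  let ?kappa = "tlift sHH sH tHH (\<lambda>a b. sH (eps b) a)"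
  have kappa_bil: "tbilinear sH sH sH (\<lambda>a b. sH (eps b) a)"
    by (rule tbilI) (simp_all add: eps_scale_hom modules module.module_hom_scale_self[OF modules(2)])
  note kappa_hom = tlift_hom[OF THH modules(2) kappa_bil]
  have psi_phi: "psi (phi e w) = tEH e (?kappa w)" for e w
    by (rule tensor_hom_eq[OF THH hom_comp[OF phi_hom psi_hom] hom_comp[OF kappa_hom tbilD(1)[OF tEH_bil]]])
      (simp add: phi_gen psi_gen tlift_gen[OF THH modules(2) kappa_bil] module_hom.scale[OF tbilD(1)[OF tEH_bil]])
  have "psi (D Z) = id Z"
    by (rule tensor_hom_eq[OF TEH hom_comp[OF D_hom psi_hom] module.module_hom_id[OF modules(3)]])
      (simp add: D_gen psi_phi counit_H)
  then show ?thesis by simp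
qed

lemma twisted_hom: "module_hom sE sEH (twisted_coaction sEH tEH dE X)"
  unfolding twisted_coaction_def by (rule hom_comp[OF dE_lin tbilD(1)[OF mEH_bil]])

lemma coact_twisted: "coact_id sEH tEH sEHH tEHH (twisted_coaction sEH tEH dE X) Z = mEHH (tEHH X 1) (C Z)"
  by (rule tensor_hom_eq[OF TEH coact_hom[OF twisted_hom] hom_comp[OF C_hom tbilD(1)[OF mEHH_bil]]])
    (simp only: coact_gen[OF twisted_hom], simp add: twisted_coaction_def C_gen mEHH_gen)

lemma left_mult_tensor: "tlift sEH sEH tEH (\<lambda>e h. tEH (y * e) h) Z = mEH (tEH y 1) Z"
proof -
  have b: "tbilinear sE sH sEH (\<lambda>e h. tEH (y * e) h)"
    by (rule tbilI) (auto intro: hom_comp tbilD[OF tEH_bil] tbilD[OF bE])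
  show ?thesis
    by (rule tensor_hom_eq[OF TEH tlift_hom[OF TEH modules(3) b] tbilD(1)[OF mEH_bil]])
      (simp add: tlift_gen[OF TEH modules(3) b] mEH_gen)
qed

end

section \<open>Twisted coactions: cocycles and Hopf-module structures\<close>

lemma right_linear_is_left_mult:
  fixes f :: "'a::monoid_mult \<Rightarrow> 'a"
  assumes "\<And>m s. f (m * s) = f m * s"
  shows "f = (\<lambda>m. f 1 * m)"
  by (rule ext) (metis assms mult_1_left)

context comodule_algebra_setting
begin

abbreviation "rho X \<equiv> twisted_coaction sEH tEH dE X"

(* Collapsing the cocycle equation (X (x) 1) C(X) = D(X) by psi yields X dE(U X) = X; as X is
   invertible and dE is injective (it has the left inverse U), the counit of X is 1. *)
lemma cocycle_counit:
  assumes XU: "X \<in> units_EH sEH tEH" and cocycle: "mEHH (tEHH X 1) (C X) = D X"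
  shows "U X = 1"
proof -
  from XU obtain Y where Y: "mEH Y X = tEH 1 1" unfolding units_EH_def by blast
  have "mEH X (dE (U X)) = X"
    using arg_cong[OF cocycle, of psi] by (simp add: psi_mult psi_left_factor psi_C psi_D)
  then have "mEH Y (mEH X (dE (U X))) = mEH Y X" by simp
  then have "dE (U X) = dE 1" by (simp add: mEH_assoc[symmetric] Y mEH_unit_left dE_1)
  then show ?thesis using counit_E by metis
qed

(* The
   cocycle equation is exactly coassociativity of rho X evaluated at 1; conversely it propagates
   from 1 to all of E by multiplicativity of C and D. *)
lemma cocycle_iff_hopf_module:
  assumes XU: "X \<in> units_EH sEH tEH"
  shows "X \<in> hopf_Z1 sHH tHH dH sEH tEH sEHH tEHH dE \<longleftrightarrow>
         hopf_module_E sHH tHH dH eps sE sEH tEH sEHH tEHH dE (rho X)"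
proof
  assume "X \<in> hopf_Z1 sHH tHH dH sEH tEH sEHH tEHH dE"
  then have cocycle: "mEHH (tEHH X 1) (C X) = D X" unfolding hopf_Z1_def by blast
  have UX: "U X = 1" by (rule cocycle_counit[OF XU cocycle])
  show "hopf_module_E sHH tHH dH eps sE sEH tEH sEHH tEHH dE (rho X)"
    unfolding hopf_module_E_def
  proof (intro conjI allI twisted_hom)
    fix m
    have "coact_id sEH tEH sEHH tEHH (rho X) (rho X m) = mEHH (tEHH X 1) (C (mEH X (dE m)))"
      unfolding coact_twisted by (simp add: twisted_coaction_def)
    also have "\<dots> = mEHH (mEHH (tEHH X 1) (C X)) (C (dE m))" by (simp add: C_mult mEHH_assoc)
    also have "\<dots> = mEHH (D X) (D (dE m))" by (simp add: cocycle coassoc_E)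
    also have "\<dots> = D (rho X m)" by (simp add: D_mult twisted_coaction_def)
    finally show "coact_id sEH tEH sEHH tEHH (rho X) (rho X m) = D (rho X m)" .
  next
    fix m show "U (rho X m) = m" by (simp add: twisted_coaction_def U_mult UX counit_E)
  next
    fix m s show "rho X (m * s) = mEH (rho X m) (dE s)"
      by (simp add: twisted_coaction_def dE_mult mEH_assoc)
  qed
next
  assume "hopf_module_E sHH tHH dH eps sE sEH tEH sEHH tEHH dE (rho X)"
  then have "coact_id sEH tEH sEHH tEHH (rho X) (rho X 1) = D (rho X 1)"
    unfolding hopf_module_E_def by blast
  moreover have "rho X 1 = X" by (simp add: twisted_coaction_def dE_1 mEH_unit_right)
  ultimately have "mEHH (tEHH X 1) (C X) = D X" by (simp add: coact_twisted)
  then show "X \<in> hopf_Z1 sHH tHH dH sEH tEH sEHH tEHH dE" unfolding hopf_Z1_def using XU by blast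
qed

lemma left_mult_hom_iff:
  "hopf_module_E_hom sE sEH tEH (rho Y) (rho Y') (\<lambda>m. a * m) \<longleftrightarrow> mEH Y' (dE a) = mEH (tEH a 1) Y"
proof
  assume "hopf_module_E_hom sE sEH tEH (rho Y) (rho Y') (\<lambda>m. a * m)"
  then have "rho Y' (a * 1) = tlift sEH sEH tEH (\<lambda>e h. tEH (a * e) h) (rho Y 1)"
    unfolding hopf_module_E_hom_def by blast
  then show "mEH Y' (dE a) = mEH (tEH a 1) Y"
    by (simp add: twisted_coaction_def left_mult_tensor dE_1 mEH_unit_right)
next
  assume intertwine: "mEH Y' (dE a) = mEH (tEH a 1) Y"
  have "rho Y' (a * m) = tlift sEH sEH tEH (\<lambda>e h. tEH (a * e) h) (rho Y m)" for m
    by (simp add: twisted_coaction_def left_mult_tensor dE_mult mEH_assoc[symmetric] intertwine)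
  then show "hopf_module_E_hom sE sEH tEH (rho Y) (rho Y') (\<lambda>m. a * m)"
    unfolding hopf_module_E_hom_def by (simp add: tbilD(1)[OF bE] mult.assoc)
qed

lemma intertwine_inverse:
  assumes ab: "a * b = 1" and ba: "b * a = 1" and intertwine: "mEH Y' (dE a) = mEH (tEH a 1) Y"
  shows "mEH Y (dE b) = mEH (tEH b 1) Y'"
proof -
  have "mEH (tEH b 1) Y' = mEH (tEH b 1) (mEH (mEH Y' (dE a)) (dE b))"
    by (simp add: mEH_assoc dE_mult[symmetric] ab dE_1 mEH_unit_right)
  also have "\<dots> = mEH Y (dE b)"
    by (simp add: intertwine mEH_assoc[symmetric] mEH_gen ba mEH_unit_left)
  finally show ?thesis by simp
qed

lemma cohomologous_iff_intertwiner:
  "cohomologous sEH tEH dE Y Y' \<longleftrightarrow>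
   (\<exists>a b. a * b = 1 \<and> b * a = 1 \<and> mEH Y' (dE a) = mEH (tEH a 1) Y)"
proof
  assume "cohomologous sEH tEH dE Y Y'"
  then obtain x y where xy: "x * y = 1" "y * x = 1" and Y': "Y' = mEH (mEH (tEH y 1) Y) (dE x)"
    unfolding cohomologous_def by blast
  have "mEH Y' (dE y) = mEH (tEH y 1) Y"
    by (simp add: Y' mEH_assoc dE_mult[symmetric] xy dE_1 mEH_unit_right)
  then show "\<exists>a b. a * b = 1 \<and> b * a = 1 \<and> mEH Y' (dE a) = mEH (tEH a 1) Y" using xy by blast
next
  assume "\<exists>a b. a * b = 1 \<and> b * a = 1 \<and> mEH Y' (dE a) = mEH (tEH a 1) Y"
  then obtain a b where ab: "a * b = 1" "b * a = 1" and intertwine: "mEH Y' (dE a) = mEH (tEH a 1) Y"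
    by blast
  have "Y' = mEH (mEH Y' (dE a)) (dE b)"
    by (simp add: mEH_assoc dE_mult[symmetric] ab dE_1 mEH_unit_right)
  then have "Y' = mEH (mEH (tEH a 1) Y) (dE b)" by (simp only: intertwine)
  then show "cohomologous sEH tEH dE Y Y'" unfolding cohomologous_def using ab by blast
qed

(* Isomorphisms of twisted Hopf modules are left multiplications by intertwining units. *)
lemma iso_iff_intertwiner:
  "hopf_module_E_iso sE sEH tEH (rho Y) (rho Y') \<longleftrightarrow>
   (\<exists>a b. a * b = 1 \<and> b * a = 1 \<and> mEH Y' (dE a) = mEH (tEH a 1) Y)"
proof
  assume "hopf_module_E_iso sE sEH tEH (rho Y) (rho Y')"
  then obtain f g where
    f: "hopf_module_E_hom sE sEH tEH (rho Y) (rho Y') f" and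
    g: "hopf_module_E_hom sE sEH tEH (rho Y') (rho Y) g" and
    gf: "\<And>x. g (f x) = x" and fg: "\<And>y. f (g y) = y"
    unfolding hopf_module_E_iso_def by blast
  define a b where "a = f 1" and "b = g 1"
  have f_eq: "f = (\<lambda>m. a * m)" and g_eq: "g = (\<lambda>m. b * m)"
    using f g unfolding hopf_module_E_hom_def a_def b_def by (blast intro: right_linear_is_left_mult)+
  have "a * b = 1" "b * a = 1"
    using fg[of 1] gf[of 1] unfolding f_eq g_eq by simp_all
  moreover have "mEH Y' (dE a) = mEH (tEH a 1) Y"
    using f unfolding f_eq left_mult_hom_iff .
  ultimately show "\<exists>a b. a * b = 1 \<and> b * a = 1 \<and> mEH Y' (dE a) = mEH (tEH a 1) Y" by blast
next
  assume "\<exists>a b. a * b = 1 \<and> b * a = 1 \<and> mEH Y' (dE a) = mEH (tEH a 1) Y"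
  then obtain a b where ab: "a * b = 1" "b * a = 1" and intertwine: "mEH Y' (dE a) = mEH (tEH a 1) Y"
    by blast
  have "hopf_module_E_hom sE sEH tEH (rho Y) (rho Y') (\<lambda>m. a * m)"
    using intertwine left_mult_hom_iff by blast
  moreover have "hopf_module_E_hom sE sEH tEH (rho Y') (rho Y) (\<lambda>m. b * m)"
    using intertwine_inverse[OF ab intertwine] left_mult_hom_iff by blast
  moreover have "b * (a * m) = m" "a * (b * m) = m" for m
    using ab by (simp_all add: mult.assoc[symmetric])
  ultimately show "hopf_module_E_iso sE sEH tEH (rho Y) (rho Y')"
    unfolding hopf_module_E_iso_def by blast
qed

end

theorem proposition1p7:
  fixes sH :: "'k::comm_ring_1 \<Rightarrow> 'h::ring_1 \<Rightarrow> 'h"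
    and sHH :: "'k \<Rightarrow> 'hh::ab_group_add \<Rightarrow> 'hh" and tHH :: "'h \<Rightarrow> 'h \<Rightarrow> 'hh"
    and sHHH :: "'k \<Rightarrow> 'hhh::ab_group_add \<Rightarrow> 'hhh" and tHHH :: "'hh \<Rightarrow> 'h \<Rightarrow> 'hhh"
    and dH :: "'h \<Rightarrow> 'hh" and eps :: "'h \<Rightarrow> 'k"
    and sE :: "'k \<Rightarrow> 'e::ring_1 \<Rightarrow> 'e"
    and sEH :: "'k \<Rightarrow> 'eh::ab_group_add \<Rightarrow> 'eh" and tEH :: "'e \<Rightarrow> 'h \<Rightarrow> 'eh"
    and sEHH :: "'k \<Rightarrow> 'ehh::ab_group_add \<Rightarrow> 'ehh" and tEHH :: "'eh \<Rightarrow> 'h \<Rightarrow> 'ehh"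
    and dE :: "'e \<Rightarrow> 'eh"
    and X :: 'eh
  assumes "hopf_algebra sH sHH tHH sHHH tHHH dH eps"
    and "comodule_algebra sH sHH tHH dH eps sE sEH tEH sEHH tEHH dE"
    and "X \<in> units_EH sEH tEH"
  shows "(X \<in> hopf_Z1 sHH tHH dH sEH tEH sEHH tEHH dE \<longleftrightarrow>
            hopf_module_E sHH tHH dH eps sE sEH tEH sEHH tEHH dE (twisted_coaction sEH tEH dE X))
       \<and> (\<forall>Y Y'. Y \<in> hopf_Z1 sHH tHH dH sEH tEH sEHH tEHH dE \<longrightarrow>
               Y' \<in> hopf_Z1 sHH tHH dH sEH tEH sEHH tEHH dE \<longrightarrow>
               (cohomologous sEH tEH dE Y Y' \<longleftrightarrow>
                hopf_module_E_iso sE sEH tEH (twisted_coaction sEH tEH dE Y)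
                                             (twisted_coaction sEH tEH dE Y')))"
proof -
  interpret comodule_algebra_setting sH sHH tHH dH eps sE sEH tEH sEHH tEHH dE
    using assms(1,2) unfolding comodule_algebra_setting_def hopf_algebra_def comodule_algebra_def
    by blast
  show ?thesis
    using cocycle_iff_hopf_module[OF assms(3)] cohomologous_iff_intertwiner iso_iff_intertwiner
    by blast
qed

end
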